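(* Let $\Bbbk$ be an algebraically closed field and $A$ any finite dimensional $\Bbbk$-algebra. Then $\operatorname{HHdim} T(T(A))=\infty$.
   Context: For a finite dimensional algebra $B$, $T(B)=B\ltimes DB$ is the trivial extension: the vector space $B\oplus DB$, where $DB=\operatorname{Hom}_\Bbbk(B,\Bbbk)$ with its natural bimodule structure, with multiplication $(a,f)(b,g)=(ab,ag+fb)$. $\operatorname{HH}_n(B)=\operatorname{Tor}^{B\otimes_\Bbbk B^{\mathrm{op}}}_n(B,B)$ is the $n$-th Hochschild homology group, and $\operatorname{HHdim}B=\sup\{n\mid \operatorname{HH}_n(B)\neq 0\}$. *)

theory Defs
  imports "HOL-Computational_Algebra.Polynomial" "HOL-Library.Extended_Nat"
begin

(* A finite-dimensional algebra is presented by its dimension d and structure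
   constants c w.r.t. a basis e_0..e_{d-1}:  e_i * e_j = sum_k c i j k e_k. *)

definition alg_closed_field :: "'k::field itself \<Rightarrow> bool" where
  "alg_closed_field _ \<longleftrightarrow> (\<forall>p :: 'k poly. degree p > 0 \<longrightarrow> (\<exists>x. poly p x = 0))"

definition fd_algebra :: "(nat \<Rightarrow> nat \<Rightarrow> nat \<Rightarrow> 'k::field) \<Rightarrow> nat \<Rightarrow> bool" where
  "fd_algebra c d \<longleftrightarrow>
     (\<forall>i<d. \<forall>j<d. \<forall>l<d. \<forall>m<d.
        (\<Sum>k<d. c i j k * c k l m) = (\<Sum>k<d. c j l k * c i k m)) \<and>
     (\<exists>u :: nat \<Rightarrow> 'k. \<forall>j<d. \<forall>m<d.
        (\<Sum>i<d. u i * c i j m) = (if j = m then 1 else 0) \<and>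
        (\<Sum>i<d. u i * c j i m) = (if j = m then 1 else 0))"

(* Trivial extension T(B) = B \<ltimes> DB, of dimension 2d: basis e_0..e_{d-1} of B,
   followed by the dual basis e_0^*..e_{d-1}^* (index d+i) of DB, with bimodule
   structure (a f b)(x) = f(b x a). Hence
   e_i e_j^* = sum_m c m i j e_m^*,  e_j^* e_i = sum_m c i m j e_m^*,  DB*DB = 0. *)
definition trivext :: "(nat \<Rightarrow> nat \<Rightarrow> nat \<Rightarrow> 'k::field) \<Rightarrow> nat \<Rightarrow> nat \<Rightarrow> nat \<Rightarrow> nat \<Rightarrow> 'k" where
  "trivext c d i j k =
     (if i < d \<and> j < d \<and> k < d then c i j k
      else if i < d \<and> d \<le> j \<and> j < 2*d \<and> d \<le> k \<and> k < 2*d then c (k - d) i (j - d)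
      else if d \<le> i \<and> i < 2*d \<and> j < d \<and> d \<le> k \<and> k < 2*d then c j (k - d) (i - d)
      else 0)"

(* basis of B^{\<otimes> m}: index tuples *)
definition tuples :: "nat \<Rightarrow> nat \<Rightarrow> nat list set" where
  "tuples d m = {xs. length xs = m \<and> set xs \<subseteq> {..<d}}"

(* Hochschild chains C_n(B) = B^{\<otimes>(n+1)}, as coefficient functions *)
definition hchains :: "nat \<Rightarrow> nat \<Rightarrow> (nat list \<Rightarrow> 'k::field) set" where
  "hchains d n = {v. \<forall>xs. v xs \<noteq> 0 \<longrightarrow> xs \<in> tuples d (n+1)}"

(* coefficient of basis tensor ys in b_n(e_xs), xs of length n+1, n \<ge> 1 *)
definition hcoef :: "(nat \<Rightarrow> nat \<Rightarrow> nat \<Rightarrow> 'k::field) \<Rightarrow> nat \<Rightarrow> nat list \<Rightarrow> nat list \<Rightarrow> 'k" where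
  "hcoef c n xs ys =
     (\<Sum>i<n. if take i xs = take i ys \<and> drop (i+2) xs = drop (i+1) ys
             then (-1)^i * c (xs!i) (xs!(i+1)) (ys!i) else 0)
     + (if tl ys = take (n-1) (tl xs) then (-1)^n * c (xs!n) (xs!0) (ys!0) else 0)"

definition hbd :: "(nat \<Rightarrow> nat \<Rightarrow> nat \<Rightarrow> 'k::field) \<Rightarrow> nat \<Rightarrow> nat \<Rightarrow> (nat list \<Rightarrow> 'k) \<Rightarrow> nat list \<Rightarrow> 'k" where
  "hbd c d n v =
     (if n = 0 then (\<lambda>_. 0)
      else (\<lambda>ys. if ys \<in> tuples d n
                 then (\<Sum>xs\<in>tuples d (n+1). v xs * hcoef c n xs ys) else 0))"

definition HH_nonzero :: "(nat \<Rightarrow> nat \<Rightarrow> nat \<Rightarrow> 'k::field) \<Rightarrow> nat \<Rightarrow> nat \<Rightarrow> bool" where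
  "HH_nonzero c d n \<longleftrightarrow>
     (\<exists>z\<in>hchains d n. hbd c d n z = (\<lambda>_. 0) \<and>
        \<not> (\<exists>w\<in>hchains d (n+1). hbd c d (n+1) w = z))"

definition HHdim :: "(nat \<Rightarrow> nat \<Rightarrow> nat \<Rightarrow> 'k::field) \<Rightarrow> nat \<Rightarrow> enat" where
  "HHdim c d = Sup {enat n | n. HH_nonzero c d n}"

end

theory Submission
  imports Defs
begin

text \<open>Write \<open>B = T(A)\<close>. The form \<open>trace (a, f) = f 1\<close> on \<open>B\<close> is symmetric,
  \<open>trace (x y) = trace (y x)\<close>, and identifies \<open>DB\<close> with \<open>B\<close> as a \<open>B\<close>-bimodule.
  In \<open>T(B)\<close> the product of two elements of \<open>DB\<close> vanishes, so every chain all of whose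
  tensor factors lie in \<open>DB\<close> is a Hochschild cycle. Transport the factors to \<open>B\<close> and take
  the trace of their product: in even degree this functional kills all boundaries, because each
  inner face contributes the two terms of the bimodule action, these telescope in the alternating
  sum, and the cyclic face cancels the remainder by symmetry of the trace. It is nonzero on a
  suitable pure \<open>DB\<close>-chain, so \<open>HH\<^sub>n(T(B)) \<noteq> 0\<close> for every even \<open>n > 0\<close>.\<close>

lemma sum_lessThan_double:
  "(\<Sum>k<2*(d::nat). f k) = (\<Sum>k<d. f k) + (\<Sum>k<d. f (k+d)::'a::comm_monoid_add)"
proof -
  have "(\<Sum>k<2*d. f k) = sum f {0..<d} + sum f {d..<2*d}"
    by (simp add: lessThan_atLeast0 sum.atLeastLessThan_concat)
  also have "sum f {d..<2*d} = (\<Sum>k<d. f (k+d))"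
    using sum.shift_bounds_nat_ivl[of f 0 d d] by (simp add: lessThan_atLeast0 mult_2)
  finally show ?thesis by (simp add: lessThan_atLeast0)
qed

lemma sum_rotate3:
  "(\<Sum>i\<in>I. \<Sum>q\<in>J. \<Sum>j\<in>K. G i q j) = (\<Sum>q\<in>J. \<Sum>j\<in>K. \<Sum>i\<in>I. G i q j)"
  by (subst sum.swap) (simp only: sum.swap[of _ I])

lemma sum_reorder4:
  "(\<Sum>i\<in>I. \<Sum>j\<in>I. \<Sum>p\<in>I. \<Sum>q\<in>I. F i j p q) = (\<Sum>p\<in>I. \<Sum>q\<in>I. \<Sum>j\<in>I. \<Sum>i\<in>I. F i j p q)"
proof -
  have "(\<Sum>i\<in>I. \<Sum>j\<in>I. \<Sum>p\<in>I. \<Sum>q\<in>I. F i j p q) = (\<Sum>i\<in>I. \<Sum>p\<in>I. \<Sum>q\<in>I. \<Sum>j\<in>I. F i j p q)"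
    using sum_rotate3[where G="\<lambda>j p q. F i j p q" and I=I and J=I and K=I for i] by simp
  also have "\<dots> = (\<Sum>p\<in>I. \<Sum>q\<in>I. \<Sum>i\<in>I. \<Sum>j\<in>I. F i j p q)"
    by (rule sum_rotate3[where G="\<lambda>i p q. \<Sum>j\<in>I. F i j p q"])
  also have "\<dots> = (\<Sum>p\<in>I. \<Sum>q\<in>I. \<Sum>j\<in>I. \<Sum>i\<in>I. F i j p q)"
    by (rule sum.cong[OF refl], rule sum.cong[OF refl], rule sum.swap)
  finally show ?thesis .
qed

lemma alternating_sum_adjacent:
  "(\<Sum>i<n+1. (-1)^i * (T i + T (Suc i))) = T 0 + (-1)^n * (T (n+1) :: 'a::comm_ring_1)"
  by (induction n) (auto simp: algebra_simps)

lemma finite_tuples: "finite (tuples N L)"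
  unfolding tuples_def using finite_lists_length_eq[of "{..<N}" L] by (simp add: conj_commute)

lemma sum_tuples_one_slot:
  assumes "set pre \<subseteq> {..<N}" "set post \<subseteq> {..<N}" "L = length pre + 1 + length post"
  shows "(\<Sum>ys\<in>tuples N L.
            if take (length pre) ys = pre \<and> drop (Suc (length pre)) ys = post then g ys else 0)
       = (\<Sum>m<N. g (pre @ m # post))"
proof -
  let ?S = "{ys \<in> tuples N L. take (length pre) ys = pre \<and> drop (Suc (length pre)) ys = post}"
  have "?S = (\<lambda>m. pre @ m # post) ` {..<N}"
  proof (intro equalityI subsetI)
    fix ys assume "ys \<in> ?S"
    then have ys: "length ys = L" "set ys \<subseteq> {..<N}"
      "take (length pre) ys = pre" "drop (Suc (length pre)) ys = post"
      by (auto simp: tuples_def)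
    then have lt: "length pre < length ys" using assms by simp
    then have "ys = pre @ ys!(length pre) # post"
      using ys id_take_nth_drop by metis
    moreover have "ys!(length pre) < N" using ys lt nth_mem by blast
    ultimately show "ys \<in> (\<lambda>m. pre @ m # post) ` {..<N}" by blast
  qed (use assms in \<open>auto simp: tuples_def\<close>)
  then show ?thesis
    by (simp add: sum.inter_filter[symmetric] finite_tuples sum.reindex inj_on_def)
qed

lemma trivext_outside: "2*d \<le> k \<Longrightarrow> trivext c d i j k = 0"
  by (simp add: trivext_def)

lemma trivext_dual_dual: "d \<le> i \<Longrightarrow> d \<le> j \<Longrightarrow> trivext c d i j k = 0"
  by (simp add: trivext_def)

lemma hbd_basis_chain_zero:
  assumes "\<And>a b k. a \<in> set ys \<Longrightarrow> b \<in> set ys \<Longrightarrow> C a b k = 0"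
  shows "hbd C N n (\<lambda>t. if t = ys then 1 else 0) = (\<lambda>_. 0)"
proof
  fix t
  have "hcoef C n ys t = 0" if "length ys = n+1"
  proof -
    have "\<And>i. i \<le> n \<Longrightarrow> ys!i \<in> set ys" using that by simp
    then show ?thesis unfolding hcoef_def by (auto intro!: sum.neutral simp: assms)
  qed
  then have "(\<Sum>xs\<in>tuples N (n+1). (if xs = ys then 1 else 0) * hcoef C n xs t) = 0"
    by (intro sum.neutral) (simp add: tuples_def)
  then show "hbd C N n (\<lambda>t. if t = ys then 1 else 0) t = 0"
    by (simp add: hbd_def)
qed

lemma trivext_assoc:
  fixes c :: "nat \<Rightarrow> nat \<Rightarrow> nat \<Rightarrow> 'k::field"
  assumes assoc: "\<And>i j l m. \<lbrakk>i < d; j < d; l < d; m < d\<rbrakk> \<Longrightarrow>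
      (\<Sum>k<d. c i j k * c k l m) = (\<Sum>k<d. c j l k * c i k m)"
    and "i < 2*d" "j < 2*d" "l < 2*d" "m < 2*d"
  shows "(\<Sum>k<2*d. trivext c d i j k * trivext c d k l m)
       = (\<Sum>k<2*d. trivext c d j l k * trivext c d i k m)"
proof -
  consider "i < d" "j < d" "l < d" "m < d" | "d \<le> i" "j < d" "l < d" "d \<le> m"
    | "i < d" "d \<le> j" "l < d" "d \<le> m" | "i < d" "j < d" "d \<le> l" "d \<le> m"
    | "\<And>k. trivext c d i j k * trivext c d k l m = 0" "\<And>k. trivext c d j l k * trivext c d i k m = 0"
    \<comment> \<open>two of \<open>i, j, l\<close> in \<open>DA\<close>, or one of them in \<open>DA\<close> and \<open>m\<close> in \<open>A\<close>: every term vanishes\<close>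
    unfolding trivext_def by fastforce
  then show ?thesis
  proof cases
    case 1
    then show ?thesis unfolding sum_lessThan_double
      using assoc[of i j l m] by (simp add: trivext_def)
  next
    case 2
    then show ?thesis unfolding sum_lessThan_double
      using assoc[of j l "m-d" "i-d"] assms by (simp add: trivext_def mult.commute)
  next
    case 3
    then show ?thesis unfolding sum_lessThan_double
      using assoc[of l "m-d" i "j-d"] assms by (simp add: trivext_def mult.commute)
  next
    case 4
    then show ?thesis unfolding sum_lessThan_double
      using assoc[of "m-d" i j "l-d"] assms by (simp add: trivext_def mult.commute)
  qed (simp only: sum.neutral_const)
qed

locale sc_algebra =
  fixes C :: "nat \<Rightarrow> nat \<Rightarrow> nat \<Rightarrow> 'k::comm_ring_1" and D :: nat
  assumes assoc: "\<And>i j l m. \<lbrakk>i < D; j < D; l < D; m < D\<rbrakk> \<Longrightarrow>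
      (\<Sum>k<D. C i j k * C k l m) = (\<Sum>k<D. C j l k * C i k m)"
    and outside: "\<And>i j k. D \<le> k \<Longrightarrow> C i j k = 0"
begin

definition vmult :: "(nat \<Rightarrow> 'k) \<Rightarrow> (nat \<Rightarrow> 'k) \<Rightarrow> nat \<Rightarrow> 'k" where
  "vmult v w = (\<lambda>k. \<Sum>i<D. \<Sum>j<D. v i * w j * C i j k)"

lemma assoc_any_target:
  assumes "i < D" "j < D" "l < D"
  shows "(\<Sum>k<D. C i j k * C k l m) = (\<Sum>k<D. C j l k * C i k m)"
  using assoc[OF assms] outside[of m] by (cases "m < D") auto

lemma vmult_assoc: "vmult (vmult a b) e = vmult a (vmult b e)"
proof
  fix k
  have "vmult (vmult a b) e k
      = (\<Sum>i<D. \<Sum>j<D. \<Sum>p<D. \<Sum>q<D. a p * b q * e j * (C p q i * C i j k))"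
    by (simp add: vmult_def sum_distrib_left sum_distrib_right ac_simps)
  also have "\<dots> = (\<Sum>p<D. \<Sum>q<D. \<Sum>j<D. a p * b q * e j * (\<Sum>i<D. C p q i * C i j k))"
    by (subst sum_reorder4) (simp add: sum_distrib_left)
  also have "\<dots> = (\<Sum>p<D. \<Sum>q<D. \<Sum>j<D. a p * b q * e j * (\<Sum>i<D. C q j i * C p i k))"
    by (intro sum.cong refl) (simp add: assoc_any_target)
  also have "\<dots> = (\<Sum>p<D. \<Sum>i<D. \<Sum>q<D. \<Sum>j<D. a p * b q * e j * (C q j i * C p i k))"
    by (simp only: sum_distrib_left) (rule sum.cong[OF refl], rule sum_rotate3[symmetric])
  also have "\<dots> = vmult a (vmult b e) k"
    by (simp add: vmult_def sum_distrib_left sum_distrib_right ac_simps)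
  finally show "vmult (vmult a b) e k = vmult a (vmult b e) k" .
qed

lemma vmult_add_left: "vmult (\<lambda>k. a k + b k) w = (\<lambda>k. vmult a w k + vmult b w k)"
  by (simp add: vmult_def algebra_simps sum.distrib)

lemma vmult_add_right: "vmult w (\<lambda>k. a k + b k) = (\<lambda>k. vmult w a k + vmult w b k)"
  by (simp add: vmult_def algebra_simps sum.distrib)

lemma vmult_sum_left:
  "vmult (\<lambda>k. \<Sum>m\<in>M. f m * g m k) w = (\<lambda>k. \<Sum>m\<in>M. f m * vmult (g m) w k)"
proof
  fix k
  have "vmult (\<lambda>k. \<Sum>m\<in>M. f m * g m k) w k
      = (\<Sum>i<D. \<Sum>j<D. \<Sum>m\<in>M. f m * (g m i * w j * C i j k))"
    by (simp add: vmult_def sum_distrib_left sum_distrib_right ac_simps)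
  also have "\<dots> = (\<Sum>m\<in>M. f m * vmult (g m) w k)"
    by (subst sum_rotate3[symmetric]) (simp add: vmult_def sum_distrib_left)
  finally show "vmult (\<lambda>k. \<Sum>m\<in>M. f m * g m k) w k = (\<Sum>m\<in>M. f m * vmult (g m) w k)" .
qed

lemma vmult_sum_right:
  "vmult w (\<lambda>k. \<Sum>m\<in>M. f m * g m k) = (\<lambda>k. \<Sum>m\<in>M. f m * vmult w (g m) k)"
proof
  fix k
  have "vmult w (\<lambda>k. \<Sum>m\<in>M. f m * g m k) k
      = (\<Sum>i<D. \<Sum>j<D. \<Sum>m\<in>M. f m * (w i * g m j * C i j k))"
    by (simp add: vmult_def sum_distrib_left sum_distrib_right ac_simps)
  also have "\<dots> = (\<Sum>m\<in>M. f m * vmult w (g m) k)"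
    by (subst sum_rotate3[symmetric]) (simp add: vmult_def sum_distrib_left)
  finally show "vmult w (\<lambda>k. \<Sum>m\<in>M. f m * g m k) k = (\<Sum>m\<in>M. f m * vmult w (g m) k)" .
qed

text \<open>The empty product is a junk value; only nonempty products occur below.\<close>

fun vprod :: "(nat \<Rightarrow> 'k) list \<Rightarrow> nat \<Rightarrow> 'k" where
  "vprod [] = (\<lambda>_. 0)"
| "vprod [v] = v"
| "vprod (v # w # vs) = vmult v (vprod (w # vs))"

lemma vprod_Cons: "vs \<noteq> [] \<Longrightarrow> vprod (v # vs) = vmult v (vprod vs)"
  by (cases vs) auto

lemma vprod_snoc: "vs \<noteq> [] \<Longrightarrow> vprod (vs @ [v]) = vmult (vprod vs) v"
  by (induction vs rule: vprod.induct) (auto simp: vmult_assoc)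

lemma vprod_vmult_slot: "vprod (ps @ vmult a b # qs) = vprod (ps @ a # b # qs)"
  by (induction ps) (cases qs, auto simp: vmult_assoc vprod_Cons)

lemma vprod_add_slot:
  "vprod (ps @ (\<lambda>k. a k + b k) # qs) = (\<lambda>k. vprod (ps @ a # qs) k + vprod (ps @ b # qs) k)"
  by (induction ps) (cases qs, auto simp: vmult_add_left vmult_add_right vprod_Cons)

lemma vprod_sum_slot:
  "vprod (ps @ (\<lambda>k. \<Sum>m\<in>M. f m * g m k) # qs) = (\<lambda>k. \<Sum>m\<in>M. f m * vprod (ps @ g m # qs) k)"
  by (induction ps) (cases qs, auto simp: vmult_sum_left vmult_sum_right vprod_Cons)

definition basis_vec :: "nat \<Rightarrow> nat \<Rightarrow> 'k" where
  "basis_vec x = (\<lambda>k. if x < D \<and> k = x then 1 else 0)"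

lemma sum_basis_vec_left: "(\<Sum>i<D. basis_vec x i * F i) = (if x < D then F x else 0)"
proof -
  have "(\<Sum>i<D. basis_vec x i * F i) = (\<Sum>i<D. if i = x then (if x < D then F x else 0) else 0)"
    by (intro sum.cong refl) (auto simp: basis_vec_def)
  then show ?thesis by simp
qed

lemma vmult_basis_left: "vmult (basis_vec x) w k = (if x < D then (\<Sum>j<D. w j * C x j k) else 0)"
proof -
  have "vmult (basis_vec x) w k = (\<Sum>i<D. basis_vec x i * (\<Sum>j<D. w j * C i j k))"
    by (simp add: vmult_def sum_distrib_left mult.assoc)
  then show ?thesis by (simp add: sum_basis_vec_left)
qed

lemma vmult_basis_right: "vmult w (basis_vec y) k = (if y < D then (\<Sum>i<D. w i * C i y k) else 0)"
proof -
  have "vmult w (basis_vec y) k = (\<Sum>i<D. \<Sum>j<D. basis_vec y j * (w i * C i j k))"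
    by (simp add: vmult_def ac_simps)
  then show ?thesis by (simp add: sum_basis_vec_left)
qed

end

locale unital_algebra =
  fixes c :: "nat \<Rightarrow> nat \<Rightarrow> nat \<Rightarrow> 'k::field" and d :: nat and u :: "nat \<Rightarrow> 'k"
  assumes assoc: "\<And>i j l m. \<lbrakk>i < d; j < d; l < d; m < d\<rbrakk> \<Longrightarrow>
      (\<Sum>k<d. c i j k * c k l m) = (\<Sum>k<d. c j l k * c i k m)"
    and unit_left: "\<And>j m. \<lbrakk>j < d; m < d\<rbrakk> \<Longrightarrow> (\<Sum>i<d. u i * c i j m) = (if j = m then 1 else 0)"
    and unit_right: "\<And>j m. \<lbrakk>j < d; m < d\<rbrakk> \<Longrightarrow> (\<Sum>i<d. u i * c j i m) = (if j = m then 1 else 0)"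
begin

sublocale sc_algebra "trivext c d" "2*d"
  by unfold_locales (simp_all add: trivext_assoc[OF assoc] trivext_outside)

text \<open>The coefficients \<open>u\<close> express the unit of \<open>A\<close>, so \<open>trace (a, f) = f 1\<close>: the
  symmetrising form of the trivial extension.\<close>

definition trace :: "(nat \<Rightarrow> 'k) \<Rightarrow> 'k" where
  "trace v = (\<Sum>k<d. v (d+k) * u k)"

lemma trace_add: "trace (\<lambda>k. a k + b k) = trace a + trace b"
  by (simp add: trace_def algebra_simps sum.distrib)

lemma trace_sum: "trace (\<lambda>k. \<Sum>m\<in>M. f m * g m k) = (\<Sum>m\<in>M. f m * trace (g m))"
  by (simp add: trace_def sum_distrib_right sum_distrib_left mult.assoc) (rule sum.swap)

lemma trace_trivext_sym:
  assumes "i < 2*d" "j < 2*d"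
  shows "(\<Sum>k<d. trivext c d i j (d+k) * u k) = (\<Sum>k<d. trivext c d j i (d+k) * u k)"
proof -
  consider "i<d" "j<d" | "i<d" "j\<ge>d" | "i\<ge>d" "j<d" | "i\<ge>d" "j\<ge>d" by linarith
  then show ?thesis
  proof cases
    case 2
    then show ?thesis using assms unit_left[of i "j-d"] unit_right[of i "j-d"]
      by (simp add: trivext_def mult.commute)
  next
    case 3
    then show ?thesis using assms unit_left[of j "i-d"] unit_right[of j "i-d"]
      by (simp add: trivext_def mult.commute)
  qed (simp_all add: trivext_def)
qed

lemma trace_vmult_commute: "trace (vmult a b) = trace (vmult b a)"
proof -
  have "trace (vmult a b) = (\<Sum>k<d. \<Sum>i<2*d. \<Sum>j<2*d. a i * b j * (trivext c d i j (d+k) * u k))"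
    by (simp add: trace_def vmult_def sum_distrib_right mult.assoc)
  also have "\<dots> = (\<Sum>i<2*d. \<Sum>j<2*d. a i * b j * (\<Sum>k<d. trivext c d i j (d+k) * u k))"
    by (subst sum_rotate3) (simp add: sum_distrib_left)
  also have "\<dots> = (\<Sum>i<2*d. \<Sum>j<2*d. a i * b j * (\<Sum>k<d. trivext c d j i (d+k) * u k))"
    by (intro sum.cong refl) (simp add: trace_trivext_sym)
  also have "\<dots> = (\<Sum>j<2*d. \<Sum>i<2*d. b j * a i * (\<Sum>k<d. trivext c d j i (d+k) * u k))"
    by (subst sum.swap) (simp add: mult.commute)
  also have "\<dots> = (\<Sum>k<d. \<Sum>j<2*d. \<Sum>i<2*d. b j * a i * (trivext c d j i (d+k) * u k))"
    by (subst sum_rotate3) (simp add: sum_distrib_left)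
  also have "\<dots> = trace (vmult b a)"
    by (simp add: trace_def vmult_def sum_distrib_right mult.assoc)
  finally show ?thesis .
qed

lemma trace_vprod_rotate: "vs \<noteq> [] \<Longrightarrow> trace (vprod (v # vs)) = trace (vprod (vs @ [v]))"
  by (simp add: vprod_Cons vprod_snoc trace_vmult_commute)

lemma trace_dual_basis_vmult:
  assumes "m < d"
  shows "trace (vmult (basis_vec (d+m)) w) = w m"
proof -
  have "trace (vmult (basis_vec (d+m)) w) = (\<Sum>k<d. (\<Sum>j<d. w j * c j k m) * u k)"
    using assms by (simp add: trace_def vmult_basis_left sum_lessThan_double trivext_def)
  also have "\<dots> = (\<Sum>j<d. w j * (\<Sum>k<d. u k * c j k m))"
    by (simp add: sum_distrib_left sum_distrib_right ac_simps) (rule sum.swap)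
  also have "\<dots> = (\<Sum>j<d. if j = m then w m else 0)"
    using assms by (intro sum.cong refl) (simp add: unit_right)
  also have "\<dots> = w m"
    using assms by simp
  finally show ?thesis .
qed

lemma unit_left_vmult:
  assumes "m < d"
  shows "(\<Sum>i<d. u i * vmult (basis_vec i) w m) = w m"
proof -
  have "(\<Sum>i<d. u i * vmult (basis_vec i) w m) = (\<Sum>i<d. u i * (\<Sum>j<d. w j * c i j m))"
    using assms by (intro sum.cong refl)
      (simp add: vmult_basis_left sum_lessThan_double trivext_def)
  also have "\<dots> = (\<Sum>j<d. w j * (\<Sum>i<d. u i * c i j m))"
    by (simp add: sum_distrib_left sum_distrib_right ac_simps) (rule sum.swap)
  also have "\<dots> = (\<Sum>j<d. if j = m then w m else 0)"
    using assms by (intro sum.cong refl) (simp add: unit_left)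
  also have "\<dots> = w m"
    using assms by simp
  finally show ?thesis .
qed

lemma exists_word_nonzero_coeff:
  assumes "m < d"
  shows "\<exists>xs. length xs = Suc n \<and> set xs \<subseteq> {..<d} \<and> vprod (map basis_vec xs) m \<noteq> 0"
proof (induction n)
  case 0
  show ?case using assms by (intro exI[of _ "[m]"]) (simp add: basis_vec_def)
next
  case (Suc n)
  then obtain xs where xs: "length xs = Suc n" "set xs \<subseteq> {..<d}" "vprod (map basis_vec xs) m \<noteq> 0"
    by blast
  have "(\<Sum>i<d. u i * vmult (basis_vec i) (vprod (map basis_vec xs)) m) \<noteq> 0"
    using unit_left_vmult[OF assms] xs by simp
  then obtain i where i: "i < d" "u i * vmult (basis_vec i) (vprod (map basis_vec xs)) m \<noteq> 0"
    using sum.not_neutral_contains_not_neutral by blast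
  have "vprod (map basis_vec (i # xs)) = vmult (basis_vec i) (vprod (map basis_vec xs))"
    using xs(1) by (cases xs) (simp_all add: vprod_Cons)
  then show ?case using xs i by (intro exI[of _ "i # xs"]) auto
qed

abbreviation cTT :: "nat \<Rightarrow> nat \<Rightarrow> nat \<Rightarrow> 'k" where
  "cTT \<equiv> trivext (trivext c d) (2*d)"

text \<open>The trace form identifies \<open>DB\<close> with \<open>B = T(A)\<close> as a bimodule, the dual basis vector
  \<open>e\<^sub>j\<^sup>*\<close> corresponding to \<open>e\<^bsub>swap j\<^esub>\<close>. Accordingly \<open>dual_vec m\<close> is the image in \<open>B\<close>
  of the basis vector \<open>m\<close> of \<open>DB \<subseteq> T(B)\<close>; it is \<open>0\<close> for the indices \<open>m < 2d\<close> of \<open>B\<close>.\<close>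

definition swap :: "nat \<Rightarrow> nat" where
  "swap j = (if j < d then j + d else j - d)"

definition dual_vec :: "nat \<Rightarrow> nat \<Rightarrow> 'k" where
  "dual_vec m = (\<lambda>k. if 2*d \<le> m \<and> m < 2*(2*d) \<and> k = swap (m - 2*d) then 1 else 0)"

lemma swap_less: "j < 2*d \<Longrightarrow> swap j < 2*d"
  unfolding swap_def by arith

lemma swap_swap: "j < 2*d \<Longrightarrow> swap (swap j) = j"
  unfolding swap_def by arith

lemma trivext_swap_left:
  "\<lbrakk>x < 2*d; k < 2*d; y < 2*d\<rbrakk> \<Longrightarrow> trivext c d (swap k) x y = trivext c d x (swap y) k"
  by (cases "x<d"; cases "k<d"; cases "y<d"; auto simp: swap_def trivext_def)

lemma trivext_swap_right:
  "\<lbrakk>x < 2*d; k < 2*d; y < 2*d\<rbrakk> \<Longrightarrow> trivext c d y (swap k) x = trivext c d (swap x) y k"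
  by (cases "x<d"; cases "k<d"; cases "y<d"; auto simp: swap_def trivext_def)

lemma dual_vec_at:
  assumes "k < 2*d"
  shows "dual_vec m k = (if m = 2*d + swap k then 1 else 0)"
proof -
  have "2*d \<le> m \<and> m < 2*(2*d) \<and> k = swap (m - 2*d) \<longleftrightarrow> m = 2*d + swap k"
    using assms swap_less[of k] swap_less[of "m - 2*d"] swap_swap[of k] swap_swap[of "m - 2*d"]
    by auto
  then show ?thesis by (simp add: dual_vec_def)
qed

lemma sum_dual_vec_left:
  "(\<Sum>i<2*d. dual_vec y i * F i) = (if 2*d \<le> y \<and> y < 2*(2*d) then F (swap (y - 2*d)) else 0)"
proof -
  have "(\<Sum>i<2*d. dual_vec y i * F i)
      = (\<Sum>i<2*d. if i = swap (y - 2*d) then (if 2*d \<le> y \<and> y < 2*(2*d) then F i else 0) else 0)"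
    by (intro sum.cong refl) (auto simp: dual_vec_def)
  moreover have "2*d \<le> y \<and> y < 2*(2*d) \<Longrightarrow> swap (y - 2*d) < 2*d"
    by (intro swap_less) linarith
  ultimately show ?thesis by auto
qed

lemma cTT_dual_component:
  assumes "k < 2*d"
  shows "cTT x y (2*d + swap k)
       = (if x < 2*d \<and> 2*d \<le> y \<and> y < 2*(2*d) then trivext c d x (swap (y - 2*d)) k else 0)
       + (if y < 2*d \<and> 2*d \<le> x \<and> x < 2*(2*d) then trivext c d (swap (x - 2*d)) y k else 0)"
proof -
  have sk: "swap k < 2*d" using assms by (rule swap_less)
  consider "x < 2*d" "2*d \<le> y" "y < 2*(2*d)" | "y < 2*d" "2*d \<le> x" "x < 2*(2*d)"
    | "\<not> (x < 2*d \<and> 2*d \<le> y \<and> y < 2*(2*d))" "\<not> (y < 2*d \<and> 2*d \<le> x \<and> x < 2*(2*d))"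
    by linarith
  then show ?thesis
  proof cases
    case 1
    then have "cTT x y (2*d + swap k) = trivext c d (swap k) x (y - 2*d)"
      using sk by (simp add: trivext_def[of "trivext c d"])
    then show ?thesis using 1 assms trivext_swap_left by simp
  next
    case 2
    then have "cTT x y (2*d + swap k) = trivext c d y (swap k) (x - 2*d)"
      using sk by (simp add: trivext_def[of "trivext c d"])
    then show ?thesis using 2 assms trivext_swap_right by simp
  next
    case 3
    then show ?thesis using sk by (auto simp add: trivext_def[of "trivext c d"])
  qed
qed

text \<open>Only the bimodule action contributes, since \<open>DB \<cdot> DB = 0\<close>.\<close>

lemma cTT_dual_part:
  "(\<lambda>k. \<Sum>m<2*(2*d). cTT x y m * dual_vec m k)
     = (\<lambda>k. vmult (basis_vec x) (dual_vec y) k + vmult (dual_vec x) (basis_vec y) k)"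
proof
  fix k
  show "(\<Sum>m<2*(2*d). cTT x y m * dual_vec m k)
      = vmult (basis_vec x) (dual_vec y) k + vmult (dual_vec x) (basis_vec y) k"
  proof (cases "k < 2*d")
    case True
    have "(\<Sum>m<2*(2*d). cTT x y m * dual_vec m k) = cTT x y (2*d + swap k)"
      using True swap_less[of k] by (simp add: dual_vec_at if_distrib cong: if_cong)
    then show ?thesis
      using True by (simp add: cTT_dual_component vmult_basis_left vmult_basis_right sum_dual_vec_left)
  next
    case False
    then have "dual_vec m k = 0" if "m < 2*(2*d)" for m
      using that swap_less[of "m - 2*d"] by (auto simp: dual_vec_def)
    then show ?thesis
      using False by (simp add: vmult_def trivext_outside)
  qed
qed


definition cocycle :: "nat list \<Rightarrow> 'k" where
  "cocycle ys = trace (vprod (map dual_vec ys))"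

definition mixed_trace :: "nat list \<Rightarrow> nat \<Rightarrow> 'k" where
  "mixed_trace xs j = trace (vprod ((map dual_vec xs)[j := basis_vec (xs!j)]))"

lemma cocycle_contract_slot:
  "(\<Sum>m<2*(2*d). cTT a b m * cocycle (pre @ m # post))
     = trace (vprod (map dual_vec pre @ basis_vec a # dual_vec b # map dual_vec post))
     + trace (vprod (map dual_vec pre @ dual_vec a # basis_vec b # map dual_vec post))"
proof -
  let ?P = "map dual_vec pre" and ?Q = "map dual_vec post"
  have "(\<Sum>m<2*(2*d). cTT a b m * cocycle (pre @ m # post))
      = trace (vprod (?P @ (\<lambda>k. \<Sum>m<2*(2*d). cTT a b m * dual_vec m k) # ?Q))"
    by (simp add: cocycle_def trace_sum vprod_sum_slot)
  also have "\<dots> = trace (vprod (?P @ vmult (basis_vec a) (dual_vec b) # ?Q))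
                 + trace (vprod (?P @ vmult (dual_vec a) (basis_vec b) # ?Q))"
    by (simp only: cTT_dual_part vprod_add_slot trace_add)
  finally show ?thesis by (simp add: vprod_vmult_slot)
qed

lemma cocycle_inner_face:
  assumes xs: "xs \<in> tuples (2*(2*d)) (n+2)" and i: "i < n+1"
  shows "(\<Sum>ys\<in>tuples (2*(2*d)) (n+1).
            (if take i xs = take i ys \<and> drop (i+2) xs = drop (i+1) ys
             then cTT (xs!i) (xs!(i+1)) (ys!i) else 0) * cocycle ys)
       = mixed_trace xs i + mixed_trace xs (Suc i)"
proof -
  define A where "A = take i xs"
  define B where "B = drop (i+2) xs"
  have lx: "length xs = n+2" and sx: "set xs \<subseteq> {..<2*(2*d)}"
    using xs by (auto simp: tuples_def)
  have lA: "length A = i" using lx i by (simp add: A_def)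
  have "drop (Suc i) xs = xs!(i+1) # B"
    using Cons_nth_drop_Suc[of "Suc i" xs] lx i by (simp add: B_def)
  then have dec: "xs = A @ xs!i # xs!(i+1) # B"
    using id_take_nth_drop[of i xs] lx i by (simp add: A_def)
  have sA: "set A \<subseteq> {..<2*(2*d)}" using sx by (auto simp: A_def dest: in_set_takeD)
  have sB: "set B \<subseteq> {..<2*(2*d)}" using sx by (auto simp: B_def dest: in_set_dropD)
  have "(\<Sum>ys\<in>tuples (2*(2*d)) (n+1).
            (if take i xs = take i ys \<and> drop (i+2) xs = drop (i+1) ys
             then cTT (xs!i) (xs!(i+1)) (ys!i) else 0) * cocycle ys)
      = (\<Sum>ys\<in>tuples (2*(2*d)) (n+1). if take (length A) ys = A \<and> drop (Suc (length A)) ys = B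
             then cTT (xs!i) (xs!(i+1)) (ys!i) * cocycle ys else 0)"
    by (intro sum.cong refl) (auto simp: lA B_def simp flip: A_def)
  also have "\<dots> = (\<Sum>m<2*(2*d). cTT (xs!i) (xs!(i+1)) m * cocycle (A @ m # B))"
    using sum_tuples_one_slot[OF sA sB, of "n+1" "\<lambda>ys. cTT (xs!i) (xs!(i+1)) (ys!i) * cocycle ys"]
      lA lx i by (simp add: B_def nth_append)
  also have "\<dots> = mixed_trace xs i + mixed_trace xs (Suc i)"
    unfolding cocycle_contract_slot mixed_trace_def
    by (subst (3 4 5 6) dec) (simp add: lA list_update_append nth_append)
  finally show ?thesis .
qed

lemma cocycle_cyclic_face:
  assumes xs: "xs \<in> tuples (2*(2*d)) (n+2)"
  shows "(\<Sum>ys\<in>tuples (2*(2*d)) (n+1).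
            (if tl ys = take n (tl xs) then cTT (xs!(n+1)) (xs!0) (ys!0) else 0) * cocycle ys)
       = mixed_trace xs (n+1) + mixed_trace xs 0"
proof -
  define a where "a = xs!0"
  define z where "z = xs!(n+1)"
  define B where "B = take n (tl xs)"
  have lx: "length xs = n+2" and sx: "set xs \<subseteq> {..<2*(2*d)}"
    using xs by (auto simp: tuples_def)
  then have dec: "xs = a # B @ [z]"
    by (cases xs) (auto simp: a_def B_def z_def take_Suc_conv_app_nth[symmetric])
  have lB: "length B = n" using lx by (simp add: B_def)
  have sB: "set B \<subseteq> {..<2*(2*d)}" using sx by (cases xs) (auto simp: B_def dest: in_set_takeD)
  have "(\<Sum>ys\<in>tuples (2*(2*d)) (n+1).
            (if tl ys = take n (tl xs) then cTT z a (ys!0) else 0) * cocycle ys)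
      = (\<Sum>ys\<in>tuples (2*(2*d)) (n+1).
            if take (length ([]::nat list)) ys = [] \<and> drop (Suc (length ([]::nat list))) ys = B
            then cTT z a (ys!0) * cocycle ys else 0)"
    by (intro sum.cong refl) (simp add: B_def drop_Suc)
  also have "\<dots> = (\<Sum>m<2*(2*d). cTT z a m * cocycle (m # B))"
    using sum_tuples_one_slot[of "[]" _ B "n+1" "\<lambda>ys. cTT z a (ys!0) * cocycle ys"] sB lB
    by simp
  also have "\<dots> = trace (vprod (basis_vec z # dual_vec a # map dual_vec B))
                 + trace (vprod (dual_vec z # basis_vec a # map dual_vec B))"
    using cocycle_contract_slot[of _ _ "[]"] by simp
  also have "\<dots> = trace (vprod ((dual_vec a # map dual_vec B) @ [basis_vec z]))
                 + trace (vprod ((basis_vec a # map dual_vec B) @ [dual_vec z]))"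
    by (simp only: trace_vprod_rotate list.simps(3) not_False_eq_True)
  also have "\<dots> = mixed_trace xs (n+1) + mixed_trace xs 0"
    unfolding mixed_trace_def by (simp add: dec lB list_update_append nth_append)
  finally show ?thesis unfolding a_def z_def .
qed


lemma cocycle_hcoef_sum:
  assumes xs: "xs \<in> tuples (2*(2*d)) (n+2)" and n: "even n"
  shows "(\<Sum>ys\<in>tuples (2*(2*d)) (n+1). hcoef cTT (n+1) xs ys * cocycle ys) = 0"
proof -
  let ?Y = "tuples (2*(2*d)) (n+1)" and ?T = "mixed_trace xs"
  define H where "H i ys = (if take i xs = take i ys \<and> drop (i+2) xs = drop (i+1) ys
                            then cTT (xs!i) (xs!(i+1)) (ys!i) else 0)" for i ys
  define Cy where "Cy ys = (if tl ys = take n (tl xs) then cTT (xs!(n+1)) (xs!0) (ys!0) else 0)"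
    for ys
  have hcoef_split: "hcoef cTT (n+1) xs ys = (\<Sum>i<n+1. (-1)^i * H i ys) + (-1)^(n+1) * Cy ys" for ys
    by (simp add: hcoef_def H_def Cy_def if_distrib cong: if_cong)
  have "(\<Sum>ys\<in>?Y. hcoef cTT (n+1) xs ys * cocycle ys)
      = (\<Sum>ys\<in>?Y. (\<Sum>i<n+1. (-1)^i * (H i ys * cocycle ys)) + (-1)^(n+1) * (Cy ys * cocycle ys))"
    by (simp only: hcoef_split distrib_right sum_distrib_right mult.assoc)
  also have "\<dots> = (\<Sum>i<n+1. (-1)^i * (\<Sum>ys\<in>?Y. H i ys * cocycle ys))
                 + (-1)^(n+1) * (\<Sum>ys\<in>?Y. Cy ys * cocycle ys)"
    by (simp only: sum.distrib sum_distrib_left) (subst sum.swap, rule refl)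
  also have "\<dots> = (\<Sum>i<n+1. (-1)^i * (?T i + ?T (Suc i))) + (-1)^(n+1) * (?T (n+1) + ?T 0)"
    using cocycle_inner_face[OF xs] cocycle_cyclic_face[OF xs] by (simp add: H_def Cy_def)
  also have "\<dots> = 0"
    by (simp only: alternating_sum_adjacent) (simp add: n)
  finally show ?thesis .
qed

lemma cocycle_vanishes_on_boundaries:
  assumes "even n"
  shows "(\<Sum>t\<in>tuples (2*(2*d)) (n+1). hbd cTT (2*(2*d)) (n+1) w t * cocycle t) = 0"
proof -
  let ?N = "2*(2*d)"
  have "(\<Sum>t\<in>tuples ?N (n+1). hbd cTT ?N (n+1) w t * cocycle t)
      = (\<Sum>t\<in>tuples ?N (n+1). (\<Sum>x\<in>tuples ?N (n+2). w x * hcoef cTT (n+1) x t) * cocycle t)"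
    by (intro sum.cong refl) (simp add: hbd_def numeral_2_eq_2)
  also have "\<dots> = (\<Sum>x\<in>tuples ?N (n+2). w x * (\<Sum>t\<in>tuples ?N (n+1). hcoef cTT (n+1) x t * cocycle t))"
    by (simp only: sum_distrib_left sum_distrib_right mult.assoc) (rule sum.swap)
  also have "\<dots> = 0"
    using cocycle_hcoef_sum assms by simp
  finally show ?thesis .
qed

lemma exists_unit_coeff_nonzero:
  assumes "d > 0"
  obtains m where "m < d" "u m \<noteq> 0"
proof -
  have "(\<Sum>i<d. u i * c i 0 0) \<noteq> 0" using unit_left[of 0 0] assms by simp
  then show ?thesis using that sum.not_neutral_contains_not_neutral by force
qed

lemma cocycle_word:
  assumes "m < d" "set xs \<subseteq> {..<d}" "xs \<noteq> []"
  shows "cocycle ((2*d + m) # map (\<lambda>x. 3*d + x) xs) = vprod (map basis_vec xs) m"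
proof -
  have "dual_vec (2*d + m) = basis_vec (d + m)"
    using assms(1) by (auto simp: dual_vec_def basis_vec_def swap_def)
  moreover have "map dual_vec (map (\<lambda>x. 3*d + x) xs) = map basis_vec xs"
    using assms(2) by (auto simp: dual_vec_def basis_vec_def swap_def fun_eq_iff)
  ultimately have "cocycle ((2*d + m) # map (\<lambda>x. 3*d + x) xs)
      = trace (vmult (basis_vec (d + m)) (vprod (map basis_vec xs)))"
    using assms(3) by (simp add: cocycle_def vprod_Cons del: map_map)
  then show ?thesis
    using assms(1) by (simp add: trace_dual_basis_vmult)
qed

lemma HH_nonzero_trivext_trivext:
  assumes "d > 0" "even n" "n > 0"
  shows "HH_nonzero cTT (2*(2*d)) n"
proof -
  obtain m where m: "m < d" "u m \<noteq> 0" using exists_unit_coeff_nonzero assms(1) by blast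
  obtain n' where n': "n = Suc n'" using assms(3) by (cases n) auto
  obtain xs where xs: "length xs = n" "set xs \<subseteq> {..<d}" "vprod (map basis_vec xs) m \<noteq> 0"
    using exists_word_nonzero_coeff[OF m(1)] n' by blast
  have "xs \<noteq> []" using xs(1) n' by auto
  define ys where "ys = (2*d + m) # map (\<lambda>x. 3*d + x) xs"
  have ys: "ys \<in> tuples (2*(2*d)) (n+1)" using xs m by (auto simp: ys_def tuples_def)
  define z where "z = (\<lambda>t. if t = ys then (1::'k) else 0)"
  have "z \<in> hchains (2*(2*d)) n" using ys by (auto simp: z_def hchains_def)
  moreover have "hbd cTT (2*(2*d)) n z = (\<lambda>_. 0)"
    unfolding z_def by (rule hbd_basis_chain_zero) (auto simp: ys_def trivext_dual_dual)
  moreover have "hbd cTT (2*(2*d)) (n+1) w \<noteq> z" for w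
  proof
    assume "hbd cTT (2*(2*d)) (n+1) w = z"
    then have "(\<Sum>t\<in>tuples (2*(2*d)) (n+1). z t * cocycle t) = 0"
      using cocycle_vanishes_on_boundaries assms(2) by blast
    moreover have "(\<Sum>t\<in>tuples (2*(2*d)) (n+1). z t * cocycle t)
        = (\<Sum>t\<in>tuples (2*(2*d)) (n+1). if t = ys then cocycle ys else 0)"
      by (intro sum.cong refl) (simp add: z_def)
    ultimately show False
      using cocycle_word[OF m(1) xs(2) \<open>xs \<noteq> []\<close>] xs(3) ys finite_tuples by (simp add: ys_def)
  qed
  ultimately show ?thesis unfolding HH_nonzero_def by blast
qed

end

theorem corollary3p6:
  fixes c :: "nat \<Rightarrow> nat \<Rightarrow> nat \<Rightarrow> 'k::field" and d :: nat
  assumes "alg_closed_field TYPE('k)"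
    and "fd_algebra c d"
    and "d > 0"
  shows "HHdim (trivext (trivext c d) (2*d)) (2*(2*d)) = \<infinity>"
proof -
  from assms(2) obtain u where "unital_algebra c d u"
    unfolding fd_algebra_def unital_algebra_def by blast
  then interpret unital_algebra c d u .
  have "\<exists>n\<in>{enat n | n. HH_nonzero cTT (2*(2*d)) n}. x < n" if "x < \<infinity>" for x
  proof -
    obtain k where "x = enat k" using \<open>x < \<infinity>\<close> by (cases x) auto
    moreover have "HH_nonzero cTT (2*(2*d)) (2*k+2)"
      using assms(3) by (intro HH_nonzero_trivext_trivext) auto
    ultimately show ?thesis by (intro bexI[of _ "enat (2*k+2)"]) auto
  qed
  then show ?thesis
    unfolding HHdim_def by (simp add: Sup_eq_top_iff flip: top_enat_def)
qed

end
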